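(* Let $\Gamma=\langle N,H,P,(u_i)_{i\in N}\rangle$ be an extensive game with perfect information with $N=\{1,\ldots,n\}$, and let $\mathcal{G}_\Gamma$ be the GAL-structure for $\Gamma$ described in the context. Let \[\alpha \;=\; [AG]\Big(\textstyle\bigwedge_{i\in N}\, i\rightarrow \forall v_{s_i}\big(u_i(O_h(h,v^*_{s_1},\ldots,v^*_{s_n}))\geq u_i(O_h(h,v^*_{s_1},\ldots,v_{s_i},\ldots,v^*_{s_n}))\big)\Big)\] and \[\beta \;=\; [EG]\Big( h\in O(v^*_{s_1},\ldots,v^*_{s_n}) \;\wedge\; \textstyle\bigwedge_{i\in N}\, i\rightarrow \forall v_{s_i}\big(u_i(O_h(h,v^*_{s_1},\ldots,v^*_{s_n}))\geq u_i(O_h(h,v^*_{s_1},\ldots,v_{s_i},\ldots,v^*_{s_n}))\big)\Big).\] Let $s^*=(s^*_1,\ldots,s^*_n)$ be a strategy profile and let $(\sigma_{S_i})_{i\in N}$ be valuations with $\sigma_{S_i}(v^*_{s_i})=s^*_i$ for each $i$. Then: (1) $s^*$ is a subgame perfect equilibrium of $\Gamma$ if and only if $\mathcal{G}_\Gamma,(\sigma_{S_i})\models_{\emptyset}\alpha$; (2) $s^*$ is a Nash equilibrium of $\Gamma$ if and only if $\mathcal{G}_\Gamma,(\sigma_{S_i})\models_{\emptyset}\beta$.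
   Context: An extensive game with perfect information is a tuple $\langle N,H,P,(u_i)\rangle$: $N$ a set of players; $H$ a set of (finite or infinite) sequences of actions (histories) such that the empty sequence $\emptyset\in H$, $H$ is closed under taking initial segments, and if every finite initial segment of an infinite sequence is in $H$ then so is the infinite sequence. A history is terminal if it is infinite or there is no action $a$ with $(h,a)\in H$; $T$ is the set of terminal histories. $P$ assigns a player to each non-terminal history, and each $u_i:T\to U$ is a real-valued (utility) function. A strategy of player $i$ is a function assigning to each non-terminal history $h$ with $P(h)=i$ an action $a$ with $(h,a)\in H$; $S_i$ is the set of player $i$'s strategies. For a history $h$ and a profile $s=(s_1,\dots,s_n)$, $O_h(h,s_1,\ldots,s_n)$ is the terminal history obtained by starting at $h$ and letting each player follow his strategy; $O(s)=O_h(\emptyset,s)$ is the outcome. A profile $s^*$ is a subgame perfect equilibrium (SPE) if for every player $i$, every history $h\in H$ with $P(h)=i$ and every $s_i\in S_i$: $u_i(O_h(h,s^*_1,\ldots,s^*_n))\geq u_i(O_h(h,s^*_1,\ldots,s_i,\ldots,s^*_n))$. A profile $s^*$ is a Nash equilibrium (NE) if the same inequality holds for every player $i$, every $s_i\in S_i$ and every history $h$ on the path of $s^*$ (i.e. $h$ is an initial segment of $O(s^* )$) with $P(h)=i$. The GAL-structure $\mathcal{G}_\Gamma$: its states are the histories $h\in H$, the initial state is $\emptyset$; the transition (action) relation is $\mathcal{CA}=\{\langle h,(h,a)\rangle : (h,a)\in H\}$; at each state $h$ the set of players to move is $N_h=\{P(h)\}$ if $h$ is non-terminal and $N_h=\emptyset$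 otherwise. It is many-sorted with sorts $H$ (domain $H$), $T$ (domain $T$), $S_i$ (domain $S_i$, the strategies of player $i$) and $U$ (utility values); the 0-ary symbol $h$ is non-rigid and at state $h_k$ denotes the history $h_k$ itself; $u_i$, $O$, $O_h$ and $\geq$ are interpreted rigidly (same at every state) as in $\Gamma$, and "$h\in O(\ldots)$" holds at a state $h_k$ iff $h_k$ is an initial segment of (lies on) the outcome $O(\ldots)$. Semantics: the atomic formula $i$ (a player) holds at state $e$ iff $i\in N_e$; $\forall v_{s_i}\varphi$ holds iff $\varphi$ holds for every value of $v_{s_i}$ in $S_i$; Boolean connectives as usual. A path from $e$ is a maximal sequence of states starting at $e$ along $\mathcal{CA}$: either infinite, or finite ending in a state with no successor. $[AG]\varphi$ holds at $e$ iff $\varphi$ holds at every state of every path from $e$; $[EG]\varphi$ holds at $e$ iff there is a path from $e$ every state of which satisfies $\varphi$. $\mathcal{G},(\sigma)\models_e\varphi$ means state $e$ satisfies $\varphi$ under valuation $\sigma$ of the free variables. *)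

theory Defs
  imports Complex_Main
begin

datatype 'a hist = HFin "'a list" | HInf "nat \<Rightarrow> 'a"

definition nonterm :: "'a hist set \<Rightarrow> 'a list \<Rightarrow> bool" where
  "nonterm H h \<longleftrightarrow> HFin h \<in> H \<and> (\<exists>a. HFin (h @ [a]) \<in> H)"

definition terminal :: "'a hist set \<Rightarrow> 'a hist \<Rightarrow> bool" where
  "terminal H g \<longleftrightarrow> g \<in> H \<and> (case g of HInf _ \<Rightarrow> True | HFin h \<Rightarrow> \<not> (\<exists>a. HFin (h @ [a]) \<in> H))"

text \<open>Utilities are arbitrary real functions
  u :: nat => 'a hist => real (only their values on T matter).\<close>
definition ext_game :: "nat \<Rightarrow> 'a hist set \<Rightarrow> ('a list \<Rightarrow> nat) \<Rightarrow> bool" where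
  "ext_game n H P \<longleftrightarrow>
     HFin [] \<in> H
   \<and> (\<forall>xs ys. HFin (xs @ ys) \<in> H \<longrightarrow> HFin xs \<in> H)
   \<and> (\<forall>f. HInf f \<in> H \<longleftrightarrow> (\<forall>k. HFin (map f [0..<k]) \<in> H))
   \<and> (\<forall>h. nonterm H h \<longrightarrow> P h \<in> {1..n})"

definition strategies :: "'a hist set \<Rightarrow> ('a list \<Rightarrow> nat) \<Rightarrow> nat \<Rightarrow> ('a list \<Rightarrow> 'a) set" where
  "strategies H P i = {f. \<forall>h. nonterm H h \<and> P h = i \<longrightarrow> HFin (h @ [f h]) \<in> H}"

type_synonym 'a profile = "nat \<Rightarrow> 'a list \<Rightarrow> 'a"

definition step :: "'a hist set \<Rightarrow> ('a list \<Rightarrow> nat) \<Rightarrow> 'a profile \<Rightarrow> 'a list \<Rightarrow> 'a list" where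
  "step H P s h = (if nonterm H h then h @ [s (P h) h] else h)"

definition run :: "'a hist set \<Rightarrow> ('a list \<Rightarrow> nat) \<Rightarrow> 'a profile \<Rightarrow> 'a list \<Rightarrow> nat \<Rightarrow> 'a list" where
  "run H P s h k = (step H P s ^^ k) h"

definition Oh :: "'a hist set \<Rightarrow> ('a list \<Rightarrow> nat) \<Rightarrow> 'a hist \<Rightarrow> 'a profile \<Rightarrow> 'a hist" where
  "Oh H P g s = (case g of
      HInf f \<Rightarrow> HInf f
    | HFin h \<Rightarrow> (if \<exists>k. \<not> nonterm H (run H P s h k)
               then HFin (run H P s h (LEAST k. \<not> nonterm H (run H P s h k)))
               else HInf (\<lambda>j. run H P s h (Suc j) ! j)))"

definition Out :: "'a hist set \<Rightarrow> ('a list \<Rightarrow> nat) \<Rightarrow> 'a profile \<Rightarrow> 'a hist" where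
  "Out H P s = Oh H P (HFin []) s"

fun init_seg :: "'a hist \<Rightarrow> 'a hist \<Rightarrow> bool" where
  "init_seg (HFin xs) (HFin ys) \<longleftrightarrow> (\<exists>zs. ys = xs @ zs)"
| "init_seg (HFin xs) (HInf f) \<longleftrightarrow> xs = map f [0..<length xs]"
| "init_seg (HInf f) (HInf g) \<longleftrightarrow> f = g"
| "init_seg (HInf f) (HFin ys) \<longleftrightarrow> False"

definition SPE :: "nat \<Rightarrow> 'a hist set \<Rightarrow> ('a list \<Rightarrow> nat) \<Rightarrow> (nat \<Rightarrow> 'a hist \<Rightarrow> real) \<Rightarrow> 'a profile \<Rightarrow> bool" where
  "SPE n H P u s \<longleftrightarrow>
     (\<forall>i\<in>{1..n}. \<forall>h. nonterm H h \<and> P h = i \<longrightarrow>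
        (\<forall>t\<in>strategies H P i. u i (Oh H P (HFin h) s) \<ge> u i (Oh H P (HFin h) (s(i := t)))))"

definition NE :: "nat \<Rightarrow> 'a hist set \<Rightarrow> ('a list \<Rightarrow> nat) \<Rightarrow> (nat \<Rightarrow> 'a hist \<Rightarrow> real) \<Rightarrow> 'a profile \<Rightarrow> bool" where
  "NE n H P u s \<longleftrightarrow>
     (\<forall>i\<in>{1..n}. \<forall>h. nonterm H h \<and> P h = i \<and> init_seg (HFin h) (Out H P s) \<longrightarrow>
        (\<forall>t\<in>strategies H P i. u i (Oh H P (HFin h) s) \<ge> u i (Oh H P (HFin h) (s(i := t)))))"

definition CA :: "'a hist set \<Rightarrow> 'a hist \<Rightarrow> 'a hist \<Rightarrow> bool" where
  "CA H g g' \<longleftrightarrow> (\<exists>h a. g = HFin h \<and> g' = HFin (h @ [a]) \<and> g' \<in> H)"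

definition movers :: "'a hist set \<Rightarrow> ('a list \<Rightarrow> nat) \<Rightarrow> 'a hist \<Rightarrow> nat set" where
  "movers H P g = (case g of HFin h \<Rightarrow> (if nonterm H h then {P h} else {}) | HInf _ \<Rightarrow> {})"

definition inf_path :: "'a hist set \<Rightarrow> 'a hist \<Rightarrow> (nat \<Rightarrow> 'a hist) \<Rightarrow> bool" where
  "inf_path H e p \<longleftrightarrow> p 0 = e \<and> (\<forall>k. CA H (p k) (p (Suc k)))"

definition fin_path :: "'a hist set \<Rightarrow> 'a hist \<Rightarrow> 'a hist list \<Rightarrow> bool" where
  "fin_path H e ps \<longleftrightarrow> ps \<noteq> [] \<and> hd ps = e
     \<and> (\<forall>k. Suc k < length ps \<longrightarrow> CA H (ps ! k) (ps ! Suc k))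
     \<and> \<not> (\<exists>g'. CA H (last ps) g')"

definition AG :: "'a hist set \<Rightarrow> ('a hist \<Rightarrow> bool) \<Rightarrow> 'a hist \<Rightarrow> bool" where
  "AG H \<phi> e \<longleftrightarrow> (\<forall>p. inf_path H e p \<longrightarrow> (\<forall>k. \<phi> (p k)))
                \<and> (\<forall>ps. fin_path H e ps \<longrightarrow> (\<forall>x\<in>set ps. \<phi> x))"

definition EG :: "'a hist set \<Rightarrow> ('a hist \<Rightarrow> bool) \<Rightarrow> 'a hist \<Rightarrow> bool" where
  "EG H \<phi> e \<longleftrightarrow> (\<exists>p. inf_path H e p \<and> (\<forall>k. \<phi> (p k)))
                \<or> (\<exists>ps. fin_path H e ps \<and> (\<forall>x\<in>set ps. \<phi> x))"

text \<open>Semantics at state g, under valuation v*_{s_i} := s i, of the common subformula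
  /\_{i in N} (i --> forall v_{s_i}. u_i(O_h(h, v*)) >= u_i(O_h(h, v*_{-i}, v_{s_i}))).\<close>
definition eq_body :: "nat \<Rightarrow> 'a hist set \<Rightarrow> ('a list \<Rightarrow> nat) \<Rightarrow> (nat \<Rightarrow> 'a hist \<Rightarrow> real)
    \<Rightarrow> 'a profile \<Rightarrow> 'a hist \<Rightarrow> bool" where
  "eq_body n H P u s g \<longleftrightarrow>
     (\<forall>i\<in>{1..n}. i \<in> movers H P g \<longrightarrow>
        (\<forall>t\<in>strategies H P i. u i (Oh H P g s) \<ge> u i (Oh H P g (s(i := t)))))"

definition sat_alpha :: "nat \<Rightarrow> 'a hist set \<Rightarrow> ('a list \<Rightarrow> nat) \<Rightarrow> (nat \<Rightarrow> 'a hist \<Rightarrow> real) \<Rightarrow> 'a profile \<Rightarrow> bool" where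
  "sat_alpha n H P u s \<longleftrightarrow> AG H (eq_body n H P u s) (HFin [])"

definition sat_beta :: "nat \<Rightarrow> 'a hist set \<Rightarrow> ('a list \<Rightarrow> nat) \<Rightarrow> (nat \<Rightarrow> 'a hist \<Rightarrow> real) \<Rightarrow> 'a profile \<Rightarrow> bool" where
  "sat_beta n H P u s \<longleftrightarrow>
     EG H (\<lambda>g. init_seg g (Out H P s) \<and> eq_body n H P u s g) (HFin [])"

end

theory Submission
  imports Defs
begin

text \<open>
  The body of \<alpha> and \<beta> is trivially true at terminal and infinite histories, and at a
  non-terminal history it says exactly that the mover cannot gain by deviating there.
  So \<open>s\<close> is subgame perfect iff the body holds at every history, and a Nash equilibrium
  iff it holds along the play of \<open>s\<close>. Every history of \<open>H\<close> lies on some maximal path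
  from the root (follow it, then extend arbitrarily), which gives (1). The play itself is
  a maximal path, and a maximal path all of whose states are initial segments of the play
  must visit every history of the play, since otherwise it would stop at a state that the
  play still extends; this gives (2).
\<close>

definition path_states :: "'a hist set \<Rightarrow> 'a hist \<Rightarrow> 'a hist set \<Rightarrow> bool" where
  "path_states H e X \<longleftrightarrow>
     (\<exists>p. inf_path H e p \<and> X = range p) \<or> (\<exists>ps. fin_path H e ps \<and> X = set ps)"

lemma AG_iff_path_states: "AG H \<phi> e \<longleftrightarrow> (\<forall>X. path_states H e X \<longrightarrow> (\<forall>x\<in>X. \<phi> x))"
  unfolding AG_def path_states_def by blast

lemma EG_iff_path_states: "EG H \<phi> e \<longleftrightarrow> (\<exists>X. path_states H e X \<and> (\<forall>x\<in>X. \<phi> x))"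
  unfolding EG_def path_states_def by blast

lemma not_CA_if_not_nonterm:
  assumes "ext_game n H P" and "\<not> nonterm H x"
  shows "\<not> CA H (HFin x) g"
  using assms unfolding ext_game_def nonterm_def CA_def by blast

lemma inf_path_root_state:
  assumes "inf_path H (HFin []) p"
  shows "\<exists>xs. p k = HFin xs \<and> length xs = k"
proof (induction k)
  case (Suc k)
  then obtain xs where "p k = HFin xs" "length xs = k" by blast
  moreover have "CA H (p k) (p (Suc k))" using assms by (simp add: inf_path_def)
  ultimately show ?case by (auto simp: CA_def)
qed (use assms in \<open>simp add: inf_path_def\<close>)

lemma fin_path_root_state:
  assumes "fin_path H (HFin []) ps" and "k < length ps"
  shows "\<exists>xs. ps ! k = HFin xs \<and> length xs = k"
  using assms(2)
proof (induction k)
  case 0 then show ?case using assms(1) by (cases ps) (auto simp: fin_path_def)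
next
  case (Suc k)
  then obtain xs where "ps ! k = HFin xs" "length xs = k" by auto
  moreover have "CA H (ps ! k) (ps ! Suc k)" using assms(1) Suc.prems by (simp add: fin_path_def)
  ultimately show ?case by (auto simp: CA_def)
qed

lemma init_seg_take:
  assumes "init_seg (HFin xs) g" and "init_seg (HFin ys) g" and "length xs \<le> length ys"
  shows "xs = take (length xs) ys"
proof (cases g)
  case (HFin zs)
  from HFin assms(1) obtain as where "zs = xs @ as" by auto
  moreover from HFin assms(2) obtain bs where "zs = ys @ bs" by auto
  ultimately have "take (length xs) (xs @ as) = take (length xs) (ys @ bs)" by simp
  with assms(3) show ?thesis by simp
next
  case (HInf f)
  with assms have "xs = map f [0..<length xs]" and "ys = map f [0..<length ys]" by auto
  then show ?thesis using assms(3) by (metis take_map take_upt add_0 le_add_diff_inverse)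
qed

lemma init_seg_eq:
  "init_seg (HFin xs) g \<Longrightarrow> init_seg (HFin ys) g \<Longrightarrow> length xs = length ys \<Longrightarrow> xs = ys"
  using init_seg_take by fastforce

lemma run_0 [simp]: "run H P s h 0 = h"
  by (simp add: run_def)

lemma run_Suc: "run H P s h (Suc k) = step H P s (run H P s h k)"
  by (simp add: run_def)

lemma run_prefix: "j \<le> k \<Longrightarrow> \<exists>zs. run H P s h k = run H P s h j @ zs"
proof (induction k rule: dec_induct)
  case (step k)
  then show ?case by (auto simp: run_Suc step_def)
qed simp

lemma run_stationary:
  assumes "\<not> nonterm H (run H P s h m)" and "m \<le> k"
  shows "run H P s h k = run H P s h m"
  using assms(2) by (induction k rule: dec_induct) (use assms(1) in \<open>auto simp: run_Suc step_def\<close>)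

lemma run_map_nth:
  assumes "\<forall>j. nonterm H (run H P s [] j)"
  shows "run H P s [] k = map (\<lambda>j. run H P s [] (Suc j) ! j) [0..<k]"
proof (induction k)
  case (Suc k)
  have "length (run H P s [] k) = k"
    using Suc by simp
  moreover have "run H P s [] (Suc k) = run H P s [] k @ [s (P (run H P s [] k)) (run H P s [] k)]"
    using assms by (simp add: run_Suc step_def)
  ultimately show ?case using Suc by (simp add: nth_append)
qed simp

lemma run_init_seg_Out: "init_seg (HFin (run H P s [] k)) (Out H P s)"
proof (cases "\<exists>k. \<not> nonterm H (run H P s [] k)")
  case True
  define m where "m = (LEAST k. \<not> nonterm H (run H P s [] k))"
  have stop: "\<not> nonterm H (run H P s [] m)"
    using True unfolding m_def by (metis (mono_tags) LeastI)
  have "Out H P s = HFin (run H P s [] m)"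
    using True by (simp add: Out_def Oh_def m_def)
  moreover have "\<exists>zs. run H P s [] m = run H P s [] k @ zs"
    using run_prefix run_stationary[OF stop] by (metis nle_le)
  ultimately show ?thesis by simp
next
  case False
  then have "Out H P s = HInf (\<lambda>j. run H P s [] (Suc j) ! j)"
    by (simp add: Out_def Oh_def)
  with False show ?thesis using run_map_nth[of H P s k] by simp
qed

lemma step_CA:
  assumes "ext_game n H P" and "\<forall>i\<in>{1..n}. s i \<in> strategies H P i" and "nonterm H x"
  shows "CA H (HFin x) (HFin (step H P s x))"
proof -
  have "s (P x) \<in> strategies H P (P x)"
    using assms unfolding ext_game_def by blast
  with assms(3) show ?thesis by (simp add: CA_def step_def strategies_def)
qed

lemma play_path_states:
  assumes "ext_game n H P" and "\<forall>i\<in>{1..n}. s i \<in> strategies H P i"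
  shows "path_states H (HFin []) (range (\<lambda>k. HFin (run H P s [] k)))"
proof (cases "\<exists>k. \<not> nonterm H (run H P s [] k)")
  case True
  define m where "m = (LEAST k. \<not> nonterm H (run H P s [] k))"
  have stop: "\<not> nonterm H (run H P s [] m)"
    using True unfolding m_def by (metis (mono_tags) LeastI)
  have moving: "k < m \<Longrightarrow> nonterm H (run H P s [] k)" for k
    unfolding m_def using not_less_Least by blast
  define ps where "ps = map (\<lambda>k. HFin (run H P s [] k)) [0..<Suc m]"
  have "last ps = HFin (run H P s [] m)"
    by (simp add: ps_def)
  then have "fin_path H (HFin []) ps"
    unfolding fin_path_def
    using step_CA[OF assms moving] not_CA_if_not_nonterm[OF assms(1) stop]
    by (simp add: ps_def hd_map run_Suc del: upt_Suc)
  moreover have "set ps = range (\<lambda>k. HFin (run H P s [] k))"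
  proof -
    have "run H P s [] k \<in> run H P s [] ` {0..m}" for k
      using run_stationary[OF stop, of k] by (cases "k \<le> m") auto
    then show ?thesis by (auto simp: ps_def atLeastLessThanSuc_atLeastAtMost simp del: upt_Suc)
  qed
  ultimately show ?thesis unfolding path_states_def by metis
next
  case False
  then have "inf_path H (HFin []) (\<lambda>k. HFin (run H P s [] k))"
    using step_CA[OF assms] by (simp add: inf_path_def run_Suc)
  then show ?thesis unfolding path_states_def by blast
qed

lemma path_states_through:
  assumes game: "ext_game n H P" and hH: "HFin h \<in> H"
  shows "\<exists>X. path_states H (HFin []) X \<and> HFin h \<in> X"
proof -
  define guide :: "'a profile" where
    "guide i x = (if length x < length h \<and> x = take (length x) h then h ! length x
                  else SOME a. HFin (x @ [a]) \<in> H)" for i x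
  have take_in_H: "HFin (take k h) \<in> H" for k
    using game hH unfolding ext_game_def by (metis append_take_drop_id)
  have "guide i \<in> strategies H P i" for i
    unfolding strategies_def
  proof (intro CollectI allI impI)
    fix x assume "nonterm H x \<and> P x = i"
    then have "\<exists>a. HFin (x @ [a]) \<in> H" by (simp add: nonterm_def)
    moreover have "x @ [h ! length x] = take (Suc (length x)) h"
      if "length x < length h" "x = take (length x) h"
      using that by (metis take_Suc_conv_app_nth)
    ultimately show "HFin (x @ [guide i x]) \<in> H"
      using take_in_H by (auto simp: guide_def intro: someI_ex)
  qed
  then have play: "path_states H (HFin []) (range (\<lambda>k. HFin (run H P guide [] k)))"
    using play_path_states[OF game] by blast
  have "k \<le> length h \<Longrightarrow> run H P guide [] k = take k h" for k
  proof (induction k)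
    case (Suc k)
    have "HFin (take k h @ [h ! k]) \<in> H"
      using take_in_H[of "Suc k"] Suc.prems by (simp add: take_Suc_conv_app_nth)
    then have "nonterm H (take k h)"
      using take_in_H by (auto simp: nonterm_def)
    with Suc show ?case by (simp add: run_Suc step_def guide_def take_Suc_conv_app_nth)
  qed simp
  then have "HFin h \<in> range (\<lambda>k. HFin (run H P guide [] k))"
    by (metis order_refl rangeI take_all)
  with play show ?thesis by blast
qed

lemma path_states_visits_init_segs:
  assumes game: "ext_game n H P" and X: "path_states H (HFin []) X"
    and along: "\<forall>x\<in>X. init_seg x g" and hH: "HFin h \<in> H" and hg: "init_seg (HFin h) g"
  shows "HFin h \<in> X"
proof -
  have visit: "HFin h \<in> X" if "x \<in> X" "x = HFin xs" "length xs = length h" for x xs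
  proof -
    have "init_seg (HFin xs) g" using along that by blast
    then have "xs = h" using init_seg_eq[OF _ hg] that(3) by blast
    with that show ?thesis by simp
  qed
  from X consider p where "inf_path H (HFin []) p" "X = range p"
    | ps where "fin_path H (HFin []) ps" "X = set ps"
    unfolding path_states_def by blast
  then show ?thesis
  proof cases
    case 1
    obtain xs where "p (length h) = HFin xs" "length xs = length h"
      using inf_path_root_state[OF 1(1)] by blast
    then show ?thesis using visit 1(2) by blast
  next
    case 2
    show ?thesis
    proof (cases "length h < length ps")
      case True
      obtain xs where "ps ! length h = HFin xs" "length xs = length h"
        using fin_path_root_state[OF 2(1) True] by blast
      then show ?thesis using visit 2(2) True by (meson nth_mem)
    next
      case False
      have ne: "ps \<noteq> []" using 2 by (simp add: fin_path_def)
      then obtain xs where xs: "last ps = HFin xs" "length xs = length ps - 1"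
        using fin_path_root_state[OF 2(1), of "length ps - 1"] by (auto simp: last_conv_nth)
      moreover have "length ps > 0" using ne by simp
      ultimately have short: "length xs < length h" using False by linarith
      have "init_seg (HFin xs) g" using along 2 xs(1) ne by (metis last_in_set)
      then have "xs = take (length xs) h"
        using init_seg_take[OF _ hg] short by simp
      then have "take (Suc (length xs)) h = xs @ [h ! length xs]"
        using short by (metis take_Suc_conv_app_nth)
      moreover have "HFin (take (Suc (length xs)) h) \<in> H"
        using game hH unfolding ext_game_def by (metis append_take_drop_id)
      ultimately have "CA H (last ps) (HFin (take (Suc (length xs)) h))"
        using xs(1) by (simp add: CA_def)
      with 2 show ?thesis by (auto simp: fin_path_def)
    qed
  qed
qed

lemma eq_body_HInf: "eq_body n H P u s (HInf f)"
  by (simp add: eq_body_def movers_def)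

lemma eq_body_HFin:
  assumes "ext_game n H P"
  shows "eq_body n H P u s (HFin h) \<longleftrightarrow> (nonterm H h \<longrightarrow>
     (\<forall>t\<in>strategies H P (P h). u (P h) (Oh H P (HFin h) s) \<ge> u (P h) (Oh H P (HFin h) (s(P h := t)))))"
  using assms by (auto simp: eq_body_def movers_def ext_game_def)

lemma SPE_iff_eq_body:
  assumes "ext_game n H P"
  shows "SPE n H P u s \<longleftrightarrow> (\<forall>h. HFin h \<in> H \<longrightarrow> eq_body n H P u s (HFin h))"
proof -
  have "nonterm H h \<Longrightarrow> HFin h \<in> H \<and> P h \<in> {1..n}" for h
    using assms by (simp add: ext_game_def nonterm_def)
  then show ?thesis unfolding SPE_def eq_body_HFin[OF assms] by blast
qed

lemma NE_iff_eq_body: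
  assumes "ext_game n H P"
  shows "NE n H P u s \<longleftrightarrow> (\<forall>h. init_seg (HFin h) (Out H P s) \<longrightarrow> eq_body n H P u s (HFin h))"
proof -
  have "nonterm H h \<Longrightarrow> P h \<in> {1..n}" for h
    using assms by (simp add: ext_game_def)
  then show ?thesis unfolding NE_def eq_body_HFin[OF assms] by blast
qed

lemma sat_alpha_iff_eq_body:
  assumes "ext_game n H P"
  shows "sat_alpha n H P u s \<longleftrightarrow> (\<forall>h. HFin h \<in> H \<longrightarrow> eq_body n H P u s (HFin h))"
  unfolding sat_alpha_def AG_iff_path_states
proof
  assume "\<forall>X. path_states H (HFin []) X \<longrightarrow> (\<forall>x\<in>X. eq_body n H P u s x)"
  then show "\<forall>h. HFin h \<in> H \<longrightarrow> eq_body n H P u s (HFin h)"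
    using path_states_through[OF assms] by blast
next
  assume "\<forall>h. HFin h \<in> H \<longrightarrow> eq_body n H P u s (HFin h)"
  then have "eq_body n H P u s x" for x
    by (cases x) (auto simp: eq_body_HInf eq_body_HFin[OF assms] nonterm_def)
  then show "\<forall>X. path_states H (HFin []) X \<longrightarrow> (\<forall>x\<in>X. eq_body n H P u s x)" by blast
qed

lemma sat_beta_iff_eq_body:
  assumes game: "ext_game n H P" and legal: "\<forall>i\<in>{1..n}. s i \<in> strategies H P i"
  shows "sat_beta n H P u s \<longleftrightarrow> (\<forall>h. init_seg (HFin h) (Out H P s) \<longrightarrow> eq_body n H P u s (HFin h))"
  unfolding sat_beta_def EG_iff_path_states
proof (intro iffI allI impI)
  fix h
  assume "\<exists>X. path_states H (HFin []) X \<and> (\<forall>x\<in>X. init_seg x (Out H P s) \<and> eq_body n H P u s x)"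
    and h: "init_seg (HFin h) (Out H P s)"
  then obtain X where X: "path_states H (HFin []) X" and along: "\<forall>x\<in>X. init_seg x (Out H P s)"
    and body: "\<forall>x\<in>X. eq_body n H P u s x" by blast
  show "eq_body n H P u s (HFin h)"
  proof (cases "HFin h \<in> H")
    case True
    then show ?thesis using body path_states_visits_init_segs[OF game X along True h] by blast
  qed (simp add: eq_body_HFin[OF game] nonterm_def)
next
  let ?play = "range (\<lambda>k. HFin (run H P s [] k))"
  assume "\<forall>h. init_seg (HFin h) (Out H P s) \<longrightarrow> eq_body n H P u s (HFin h)"
  then have "\<forall>x\<in>?play. init_seg x (Out H P s) \<and> eq_body n H P u s x"
    using run_init_seg_Out by blast
  with play_path_states[OF game legal] show "\<exists>X. path_states H (HFin []) X \<and>
      (\<forall>x\<in>X. init_seg x (Out H P s) \<and> eq_body n H P u s x)" by blast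
qed

theorem theorem1:
  fixes n :: nat and H :: "'a hist set" and P :: "'a list \<Rightarrow> nat"
    and u :: "nat \<Rightarrow> 'a hist \<Rightarrow> real" and s :: "'a profile"
  assumes "ext_game n H P"
    and "\<forall>i\<in>{1..n}. s i \<in> strategies H P i"
  shows "(SPE n H P u s \<longleftrightarrow> sat_alpha n H P u s) \<and> (NE n H P u s \<longleftrightarrow> sat_beta n H P u s)"
  using SPE_iff_eq_body[OF assms(1)] sat_alpha_iff_eq_body[OF assms(1)]
    NE_iff_eq_body[OF assms(1)] sat_beta_iff_eq_body[OF assms]
  by simp

end
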